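(* Let $a\in\mathbb{Z}$ and $b\in\mathbb{Z}_{>0}$. Expand $q^{-\frac12a}X_4E_{(a,b)}-E_{(a,b-1)}$ as a $\mathbb{Z}[q^{\pm\frac12}]$-linear combination of standard monomials. Then every standard monomial $E_{(c,d)}$ occurring with nonzero coefficient satisfies $c=a-1$ and $d\ge b-1\ge0$.
   Context: Let $\mathcal{T}$ be the quantum torus over $\mathbb{Z}[q^{\pm\frac12}]$ generated by $X_1^{\pm1},X_2^{\pm1}$ with $X_1X_2=qX_2X_1$, with skew field of fractions $\mathcal{F}$. Define $X_k\in\mathcal{F}$ ($k\in\mathbb{Z}$) by $X_{k-1}X_{k+1}=q^{\frac12}X_k+1$ for $k$ odd and $X_{k-1}X_{k+1}=q^2X_k^4+1$ for $k$ even; $\mathcal{A}_q(1,4)$ is the $\mathbb{Z}[q^{\pm\frac12}]$-subalgebra of $\mathcal{F}$ generated by all $X_k$. For $x\in\mathbb{Z}$, $[x]_+=\max(x,0)$. Standard monomials: $E_{(a,b)}=q^{-\frac12ab}X_3^{[-a]_+}X_1^{[a]_+}X_2^{[b]_+}X_0^{[-b]_+}$ for $(a,b)\in\mathbb{Z}^2$; they form a $\mathbb{Z}[q^{\pm\frac12}]$-basis of $\mathcal{A}_q(1,4)$. *)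

theory Defs
  imports "HOL-Library.Poly_Mapping"
begin

text \<open>Coefficient ring Z[q^(+-1/2)]: Laurent polynomials in t = q^(1/2),
  represented as finitely supported maps  exponent of t  to  integer coefficient,
  with convolution product (a commutative ring).\<close>
type_synonym lring = "int \<Rightarrow>\<^sub>0 int"

definition tp :: "int \<Rightarrow> lring" where
  "tp k = Poly_Mapping.single k 1"

text \<open>Quantum torus T: finitely supported maps (m,n) to coefficient in lring;
  the key (m,n) stands for the ordered monomial X1^m X2^n.
  From X1 X2 = q X2 X1 we get X2^n X1^m' = q^(-n m') X1^m' X2^n.\<close>
type_synonym qtorus = "(int \<times> int) \<Rightarrow>\<^sub>0 lring"

definition qmul :: "qtorus \<Rightarrow> qtorus \<Rightarrow> qtorus" where
  "qmul p r = (\<Sum>(m,n)\<in>Poly_Mapping.keys p. \<Sum>(m',n')\<in>Poly_Mapping.keys r.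
      Poly_Mapping.single (m + m', n + n')
        (tp (-2 * n * m') * Poly_Mapping.lookup p (m,n) * Poly_Mapping.lookup r (m',n')))"

definition scal :: "lring \<Rightarrow> qtorus" where
  "scal c = Poly_Mapping.single (0,0) c"

definition qone :: qtorus where "qone = scal 1"

fun qpow :: "qtorus \<Rightarrow> nat \<Rightarrow> qtorus" where
  "qpow x 0 = qone"
| "qpow x (Suc n) = qmul x (qpow x n)"

definition mono :: "int \<Rightarrow> int \<Rightarrow> qtorus" where
  "mono m n = Poly_Mapping.single (m,n) 1"

text \<open>Cluster variables X0..X4; these are the unique solutions in the skew field
  of the exchange relations X_(k-1) X_(k+1) = q^(1/2) X_k + 1 (k odd),
  = q^2 X_k^4 + 1 (k even), and they lie in the quantum torus.\<close>
definition QX1 :: qtorus where "QX1 = mono 1 0"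
definition QX2 :: qtorus where "QX2 = mono 0 1"
definition QX0 :: qtorus where
  "QX0 = qmul (qmul (scal (tp 1)) QX1 + qone) (mono 0 (-1))"   (* from X0 X2 = q^(1/2) X1 + 1 *)
definition QX3 :: qtorus where
  "QX3 = qmul (mono (-1) 0) (qmul (scal (tp 4)) (qpow QX2 4) + qone)"  (* from X1 X3 = q^2 X2^4 + 1 *)
definition QX4 :: qtorus where
  "QX4 = qmul (mono 0 (-1)) (qmul (scal (tp 1)) QX3 + qone)"   (* from X2 X4 = q^(1/2) X3 + 1 *)

definition posp :: "int \<Rightarrow> nat" where "posp x = nat (max x 0)"

definition E :: "int \<Rightarrow> int \<Rightarrow> qtorus" where
  "E a b = qmul (scal (tp (- a * b)))
     (qmul (qpow QX3 (posp (-a))) (qmul (qpow QX1 (posp a))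
        (qmul (qpow QX2 (posp b)) (qpow QX0 (posp (-b))))))"

definition lincomb :: "(int \<times> int \<Rightarrow> lring) \<Rightarrow> qtorus" where
  "lincomb f = (\<Sum>cd\<in>{cd. f cd \<noteq> 0}. qmul (scal (f cd)) (E (fst cd) (snd cd)))"

end

theory Submission
  imports Defs "HOL-Library.Product_Plus"
begin

text \<open>For a \<ge> 1 the standard monomial E(a,b) is, up to a power of q^(1/2), the single
  Laurent monomial X1^a X2^b, and multiplying it by the three terms of X4 gives E(a,b-1) plus
  multiples of E(a-1,b-1) and E(a-1,b+3). For a \<le> 0 it is X3^(-a) X2^b up to such a power;
  writing X4 = X2^(-1) (q^(1/2) X3 + 1) and moving X2^(-1) past the power of X3, which is
  homogeneous in X1 and hence q-commutes with X2, gives E(a,b-1) plus a multiple of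
  E(a-1,b-1). The expansion is unique because the standard monomials are triangular: E(c,d) is
  a power of q^(1/2) times X1^c X2^d plus terms X1^m X2^n with m \<ge> c and n \<ge> d, so in a
  nontrivial finite combination the index (c,d) minimising c + d among the nonzero
  coefficients survives at X1^c X2^d.\<close>

abbreviation qterm :: "int \<times> int \<Rightarrow> lring \<Rightarrow> qtorus" where
  "qterm \<equiv> Poly_Mapping.single"

subsection \<open>The quantum torus\<close>

lemma tp_add: "tp x * tp y = tp (x + y)"
  by (simp add: tp_def mult_single)

lemma tp_0: "tp 0 = 1"
  by (simp add: tp_def)

lemma tp_nonzero: "tp x \<noteq> 0"
  by (simp add: tp_def)

definition twist :: "int \<times> int \<Rightarrow> int \<times> int \<Rightarrow> int" where
  "twist k k' = -2 * snd k * fst k'"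

lemma qmul_on:
  assumes "finite A" "Poly_Mapping.keys p \<subseteq> A" "finite B" "Poly_Mapping.keys r \<subseteq> B"
  shows "qmul p r = (\<Sum>k\<in>A. \<Sum>k'\<in>B.
    qterm (k + k') (tp (twist k k') * Poly_Mapping.lookup p k * Poly_Mapping.lookup r k'))"
proof -
  have "qmul p r = (\<Sum>k\<in>Poly_Mapping.keys p. \<Sum>k'\<in>Poly_Mapping.keys r.
    qterm (k + k') (tp (twist k k') * Poly_Mapping.lookup p k * Poly_Mapping.lookup r k'))"
    by (simp add: qmul_def split_def twist_def plus_prod_def)
  also have "\<dots> = (\<Sum>k\<in>A. \<Sum>k'\<in>Poly_Mapping.keys r.
    qterm (k + k') (tp (twist k k') * Poly_Mapping.lookup p k * Poly_Mapping.lookup r k'))"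
    by (rule sum.mono_neutral_left) (use assms in \<open>auto simp: in_keys_iff\<close>)
  also have "\<dots> = (\<Sum>k\<in>A. \<Sum>k'\<in>B.
    qterm (k + k') (tp (twist k k') * Poly_Mapping.lookup p k * Poly_Mapping.lookup r k'))"
    by (intro sum.cong refl sum.mono_neutral_left) (use assms in \<open>auto simp: in_keys_iff\<close>)
  finally show ?thesis .
qed

lemma qmul_qterm: "qmul (qterm k c) (qterm k' c') = qterm (k + k') (tp (twist k k') * c * c')"
  by (subst qmul_on[where A="{k}" and B="{k'}"]) auto

lemma lookup_qmul: "Poly_Mapping.lookup (qmul p r) x =
  (\<Sum>k\<in>Poly_Mapping.keys p. \<Sum>k'\<in>Poly_Mapping.keys r.
    (tp (twist k k') * Poly_Mapping.lookup p k * Poly_Mapping.lookup r k' when k + k' = x))"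
  by (simp add: qmul_on[OF finite_keys order.refl finite_keys order.refl] lookup_sum lookup_single)

lemma keys_qmul:
  "x \<in> Poly_Mapping.keys (qmul p r) \<Longrightarrow>
    \<exists>k\<in>Poly_Mapping.keys p. \<exists>k'\<in>Poly_Mapping.keys r. x = k + k'"
proof (rule ccontr)
  assume "x \<in> Poly_Mapping.keys (qmul p r)"
    and "\<not> (\<exists>k\<in>Poly_Mapping.keys p. \<exists>k'\<in>Poly_Mapping.keys r. x = k + k')"
  then have "Poly_Mapping.lookup (qmul p r) x = 0"
    unfolding lookup_qmul by (intro sum.neutral ballI) (auto simp: when_def)
  with \<open>x \<in> Poly_Mapping.keys (qmul p r)\<close> show False
    by (simp add: in_keys_iff)
qed

lemma qmul_zero_left [simp]: "qmul 0 r = 0"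
  by (simp add: qmul_def)

lemma qmul_zero_right [simp]: "qmul r 0 = 0"
  by (simp add: qmul_def)

lemma qmul_add_left: "qmul (p + p') r = qmul p r + qmul p' r"
proof -
  let ?A = "Poly_Mapping.keys p \<union> Poly_Mapping.keys p'" and ?B = "Poly_Mapping.keys r"
  have "Poly_Mapping.keys (p + p') \<subseteq> ?A" by (rule keys_add)
  then show ?thesis
    by (simp add: qmul_on[of ?A _ ?B] lookup_add algebra_simps single_add sum.distrib)
qed

lemma qmul_add_right: "qmul r (p + p') = qmul r p + qmul r p'"
proof -
  let ?A = "Poly_Mapping.keys r" and ?B = "Poly_Mapping.keys p \<union> Poly_Mapping.keys p'"
  have "Poly_Mapping.keys (p + p') \<subseteq> ?B" by (rule keys_add)
  then show ?thesis
    by (simp add: qmul_on[of ?A _ ?B] lookup_add algebra_simps single_add sum.distrib)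
qed

lemma qmul_diff_left: "qmul (p - p') r = qmul p r - qmul p' r"
  by (metis add_diff_cancel diff_add_cancel qmul_add_left)

lemma qmul_sum_left: "finite I \<Longrightarrow> qmul (\<Sum>i\<in>I. f i) r = (\<Sum>i\<in>I. qmul (f i) r)"
  by (induction I rule: finite_induct) (auto simp: qmul_add_left)

lemma qmul_sum_right: "finite I \<Longrightarrow> qmul r (\<Sum>i\<in>I. f i) = (\<Sum>i\<in>I. qmul r (f i))"
  by (induction I rule: finite_induct) (auto simp: qmul_add_right)

lemma sum_singles: "p = (\<Sum>k\<in>Poly_Mapping.keys p. Poly_Mapping.single k (Poly_Mapping.lookup p k))"
  by (rule poly_mapping_eqI) (auto simp: lookup_sum lookup_single when_def in_keys_iff)

lemma additive_eq_on_singles: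
  fixes F G :: "('a \<Rightarrow>\<^sub>0 'b::comm_monoid_add) \<Rightarrow> 'c::monoid_add"
  assumes "\<And>k c. F (Poly_Mapping.single k c) = G (Poly_Mapping.single k c)"
    and "\<And>p p'. F (p + p') = F p + F p'" "\<And>p p'. G (p + p') = G p + G p'"
    and "F 0 = 0" "G 0 = 0"
  shows "F p = G p"
proof -
  have "F (\<Sum>k\<in>K. Poly_Mapping.single k (c k)) = G (\<Sum>k\<in>K. Poly_Mapping.single k (c k))"
    if "finite K" for K c
    using that by (induction K rule: finite_induct) (simp_all add: assms)
  then show ?thesis
    by (metis finite_keys sum_singles)
qed

lemma qmul_assoc: "qmul (qmul p r) s = qmul p (qmul r s)"
proof -
  have qterms: "qmul (qmul (qterm k c) (qterm k' c')) (qterm k'' c'')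
      = qmul (qterm k c) (qmul (qterm k' c') (qterm k'' c''))" for k k' k'' c c' c''
    by (simp add: qmul_qterm tp_add twist_def algebra_simps)
  have "qmul (qmul (qterm k c) (qterm k' c')) s = qmul (qterm k c) (qmul (qterm k' c') s)" for k k' c c'
    by (rule additive_eq_on_singles[where p=s]) (simp_all add: qterms qmul_add_right)
  then have "qmul (qmul (qterm k c) r) s = qmul (qterm k c) (qmul r s)" for k c
    by (rule additive_eq_on_singles[where p=r]) (simp_all add: qmul_add_right qmul_add_left)
  then show ?thesis
    by (rule additive_eq_on_singles[where p=p]) (simp_all add: qmul_add_left)
qed

lemma qmul_scal_qterm: "qmul (scal c) (qterm k d) = qterm k (c * d)"
  by (simp add: scal_def qmul_qterm twist_def tp_0 plus_prod_def)

lemma qmul_qterm_scal: "qmul (qterm k d) (scal c) = qterm k (c * d)"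
  by (simp add: scal_def qmul_qterm twist_def tp_0 plus_prod_def mult.commute)

lemma scal_central: "qmul (scal c) p = qmul p (scal c)"
  by (rule additive_eq_on_singles)
    (simp_all add: qmul_scal_qterm qmul_qterm_scal qmul_add_left qmul_add_right)

lemma scal_diff: "scal (c - d) = scal c - scal d"
  by (simp add: scal_def single_diff)

lemma lookup_qmul_scal: "Poly_Mapping.lookup (qmul (scal c) p) k = c * Poly_Mapping.lookup p k"
proof -
  have "qmul (scal c) p = (\<Sum>k\<in>Poly_Mapping.keys p. qterm k (c * Poly_Mapping.lookup p k))"
    by (subst sum_singles) (simp add: qmul_sum_right qmul_scal_qterm)
  then show ?thesis
    by (auto simp: lookup_sum lookup_single when_def in_keys_iff)
qed

lemma qmul_qone_left [simp]: "qmul qone p = p"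
  by (rule poly_mapping_eqI) (simp add: qone_def lookup_qmul_scal)

lemma qmul_qone_right [simp]: "qmul p qone = p"
  using scal_central[of 1 p] by (simp add: qone_def[symmetric])

lemma qpow_QX1: "qpow QX1 n = qterm (int n, 0) 1"
  by (induction n) (simp_all add: QX1_def mono_def qone_def scal_def qmul_qterm twist_def tp_0)

lemma qpow_QX2: "qpow QX2 n = qterm (0, int n) 1"
  by (induction n) (simp_all add: QX2_def mono_def qone_def scal_def qmul_qterm twist_def tp_0)

lemma QX0_eq: "QX0 = qterm (1, -1) (tp 1) + qterm (0, -1) 1"
  by (simp add: QX0_def QX1_def mono_def qone_def scal_def qmul_add_left qmul_qterm
      twist_def tp_0)

lemma QX3_eq: "QX3 = qterm (-1, 4) (tp 4) + qterm (-1, 0) 1"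
  by (simp add: QX3_def qpow_QX2[of 4, simplified] mono_def qone_def scal_def qmul_add_right
      qmul_qterm twist_def tp_0)

lemma QX4_eq: "QX4 = qterm (-1, 3) (tp 3) + qterm (-1, -1) (tp (-1)) + qterm (0, -1) 1"
  by (simp add: QX4_def QX3_eq mono_def qone_def scal_def qmul_add_right qmul_qterm
      twist_def tp_0 tp_add)

lemma QX4_via_QX3: "QX4 = qmul (qterm (0, -1) (tp 1)) QX3 + qterm (0, -1) 1"
  by (simp add: QX4_def mono_def qone_def qmul_add_right qmul_assoc[symmetric] qmul_qterm_scal)

definition x1_homogeneous :: "qtorus \<Rightarrow> int \<Rightarrow> bool" where
  "x1_homogeneous p m \<longleftrightarrow> (\<forall>k\<in>Poly_Mapping.keys p. fst k = m)"

lemma x1_homogeneous_qmul: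
  "x1_homogeneous p m \<Longrightarrow> x1_homogeneous r m' \<Longrightarrow> x1_homogeneous (qmul p r) (m + m')"
  unfolding x1_homogeneous_def by (fastforce dest: keys_qmul)

lemma x1_homogeneous_qpow_QX3: "x1_homogeneous (qpow QX3 n) (- int n)"
proof (induction n)
  case 0
  then show ?case
    by (simp add: x1_homogeneous_def qone_def scal_def)
next
  case (Suc n)
  have "x1_homogeneous QX3 (-1)"
    unfolding x1_homogeneous_def QX3_eq
    using keys_add[of "qterm (-1, 4) (tp 4)" "qterm (-1, 0) 1"] by (fastforce simp: tp_nonzero)
  from x1_homogeneous_qmul[OF this Suc] show ?case
    by simp
qed

lemma qterm_x2_commute:
  assumes "x1_homogeneous p m"
  shows "qmul (qterm (0, j) c) p = qmul p (qterm (0, j) (tp (-2 * j * m) * c))"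
proof -
  let ?c' = "tp (-2 * j * m) * c"
  have "qmul (qterm (0, j) c) (qterm k d) = qmul (qterm k d) (qterm (0, j) ?c')"
    if "k \<in> Poly_Mapping.keys p" for k d
  proof -
    have "fst k = m"
      using that assms by (simp add: x1_homogeneous_def)
    then show ?thesis
      by (cases k) (simp add: qmul_qterm twist_def tp_0 algebra_simps)
  qed
  then have "qmul (qterm (0, j) c) (\<Sum>k\<in>Poly_Mapping.keys p. qterm k (Poly_Mapping.lookup p k))
      = qmul (\<Sum>k\<in>Poly_Mapping.keys p. qterm k (Poly_Mapping.lookup p k)) (qterm (0, j) ?c')"
    by (simp add: qmul_sum_left qmul_sum_right)
  then show ?thesis
    by (simp flip: sum_singles)
qed

lemma qterm_x2_shift:
  assumes "x1_homogeneous p m"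
  shows "qmul (qterm (0, j) c) (qmul p (qterm (0, b) d))
    = qmul p (qterm (0, j + b) (tp (-2 * j * m) * c * d))"
  by (simp add: qmul_assoc[symmetric] qterm_x2_commute[OF assms])
    (simp add: qmul_assoc qmul_qterm twist_def tp_0)

lemma scal_into_qterm: "qmul (scal c) (qmul p (qterm k d)) = qmul p (qterm k (c * d))"
  by (simp add: qmul_assoc[symmetric] scal_central) (simp add: qmul_assoc qmul_scal_qterm)

lemma E_nonneg:
  assumes "0 \<le> a" "0 \<le> b"
  shows "E a b = qterm (a, b) (tp (- a * b))"
proof -
  have "posp (-a) = 0" "posp (-b) = 0" "int (posp a) = a" "int (posp b) = b"
    using assms by (auto simp: posp_def)
  then show ?thesis
    by (simp add: E_def qpow_QX1 qpow_QX2 qmul_scal_qterm qmul_qterm twist_def tp_0)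
qed

lemma E_nonpos_nonneg:
  assumes "a \<le> 0" "0 \<le> b"
  shows "E a b = qmul (qpow QX3 (nat (-a))) (qterm (0, b) (tp (- a * b)))"
proof -
  have "posp a = 0" "posp (-b) = 0" "posp (-a) = nat (-a)" "int (posp b) = b"
    using assms by (auto simp: posp_def)
  then show ?thesis
    by (simp add: E_def qpow_QX2 scal_central qmul_assoc qmul_qterm_scal)
qed

subsection \<open>Multiplication by X4\<close>

lemma X4_E_nonpos:
  assumes "a \<le> 0" "0 < b"
  shows "qmul (qmul (scal (tp (-a))) QX4) (E a b) - E a (b - 1)
    = qmul (scal (tp (-b))) (E (a - 1) (b - 1))"
proof -
  define n where "n = nat (-a)"
  define X where "X = qpow QX3 n"
  define Y where "Y = qmul QX3 X"
  have a: "a = - int n"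
    using assms by (simp add: n_def)
  have hX: "x1_homogeneous X (- int n)"
    by (simp add: X_def x1_homogeneous_qpow_QX3)
  have hY: "x1_homogeneous Y (- 1 - int n)"
    using x1_homogeneous_qpow_QX3[of "Suc n"] by (simp add: Y_def X_def)
  have Eab: "E a b = qmul X (qterm (0, b) (tp (- a * b)))"
    using E_nonpos_nonneg[of a b] assms by (simp add: X_def n_def)
  have Eab': "E a (b - 1) = qmul X (qterm (0, b - 1) (tp (- a * (b - 1))))"
    using E_nonpos_nonneg[of a "b - 1"] assms by (simp add: X_def n_def)
  have Ea'b': "E (a - 1) (b - 1) = qmul Y (qterm (0, b - 1) (tp (- (a - 1) * (b - 1))))"
  proof -
    have "nat (- (a - 1)) = Suc n"
      using assms by (simp add: n_def)
    then show ?thesis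
      using E_nonpos_nonneg[of "a - 1" "b - 1"] assms by (simp add: X_def Y_def)
  qed
  have "qmul (qmul (scal (tp (-a))) QX4) (E a b)
      = qmul (scal (tp (-a))) (qmul (qterm (0, -1) (tp 1)) (qmul Y (qterm (0, b) (tp (- a * b))))
        + qmul (qterm (0, -1) 1) (qmul X (qterm (0, b) (tp (- a * b)))))"
    by (simp add: Eab QX4_via_QX3 Y_def qmul_assoc qmul_add_left)
  also have "\<dots> = qmul Y (qterm (0, b - 1) (tp (-b) * tp (- (a - 1) * (b - 1))))
      + qmul X (qterm (0, b - 1) (tp (- a * (b - 1))))"
    by (simp add: qterm_x2_shift[OF hY] qterm_x2_shift[OF hX] qmul_add_right scal_into_qterm
        tp_add a algebra_simps)
  finally show ?thesis
    by (simp add: Eab' Ea'b' scal_into_qterm)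
qed

lemma X4_E_pos:
  assumes "1 \<le> a" "0 < b"
  shows "qmul (qmul (scal (tp (-a))) QX4) (E a b) - E a (b - 1)
    = qmul (scal (tp (-b))) (E (a - 1) (b - 1)) + qmul (scal (tp (-4 * a - b))) (E (a - 1) (b + 3))"
proof -
  have "qmul (qmul (scal (tp (-a))) QX4) (E a b)
      = qterm (a - 1, b + 3) (tp (-4 * a - b) * tp (- (a - 1) * (b + 3)))
        + qterm (a - 1, b - 1) (tp (-b) * tp (- (a - 1) * (b - 1)))
        + qterm (a, b - 1) (tp (- a * (b - 1)))"
    using assms
    by (simp add: E_nonneg QX4_eq qmul_assoc qmul_add_left qmul_add_right qmul_qterm
        qmul_scal_qterm twist_def tp_add algebra_simps)
  then show ?thesis
    using assms by (simp add: E_nonneg qmul_scal_qterm)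
qed

subsection \<open>Triangularity of the standard monomials\<close>

definition unit_corner :: "qtorus \<Rightarrow> int \<times> int \<Rightarrow> bool" where
  "unit_corner p k \<longleftrightarrow>
    (\<forall>k'\<in>Poly_Mapping.keys p. fst k \<le> fst k' \<and> snd k \<le> snd k') \<and>
    (\<exists>u. Poly_Mapping.lookup p k = tp u)"

lemma unit_corner_qterm: "unit_corner (qterm k (tp u)) k"
  by (auto simp: unit_corner_def tp_nonzero)

lemma unit_corner_qmul:
  assumes "unit_corner p k" "unit_corner r k'"
  shows "unit_corner (qmul p r) (k + k')"
proof -
  obtain u v where u: "Poly_Mapping.lookup p k = tp u" and v: "Poly_Mapping.lookup r k' = tp v"
    using assms by (auto simp: unit_corner_def)
  have below_p: "fst k \<le> fst l \<and> snd k \<le> snd l" if "l \<in> Poly_Mapping.keys p" for l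
    using assms(1) that by (simp add: unit_corner_def)
  have below_r: "fst k' \<le> fst l \<and> snd k' \<le> snd l" if "l \<in> Poly_Mapping.keys r" for l
    using assms(2) that by (simp add: unit_corner_def)
  have keys: "k \<in> Poly_Mapping.keys p" "k' \<in> Poly_Mapping.keys r"
    using u v by (simp_all add: in_keys_iff tp_nonzero)
  have split: "l + l' = k + k' \<longleftrightarrow> l = k \<and> l' = k'"
    if "l \<in> Poly_Mapping.keys p" "l' \<in> Poly_Mapping.keys r" for l l'
    using below_p[OF that(1)] below_r[OF that(2)] by (auto simp: prod_eq_iff)
  have "Poly_Mapping.lookup (qmul p r) (k + k')
      = (\<Sum>l\<in>Poly_Mapping.keys p. if l = k then
          (\<Sum>l'\<in>Poly_Mapping.keys r. if l' = k' then tp (twist k k') * tp u * tp v else 0) else 0)"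
    unfolding lookup_qmul by (intro sum.cong refl) (auto simp: split u v when_def)
  also have "\<dots> = tp (twist k k') * tp u * tp v"
    using keys by simp
  finally have "Poly_Mapping.lookup (qmul p r) (k + k') = tp (twist k k') * tp u * tp v" .
  moreover have "fst (k + k') \<le> fst l \<and> snd (k + k') \<le> snd l"
    if "l \<in> Poly_Mapping.keys (qmul p r)" for l
    using keys_qmul[OF that] below_p below_r by fastforce
  ultimately show ?thesis
    by (auto simp: unit_corner_def tp_add)
qed

lemma unit_corner_qpow:
  "unit_corner p (x, y) \<Longrightarrow> unit_corner (qpow p n) (int n * x, int n * y)"
proof (induction n)
  case 0
  then show ?case
    using unit_corner_qterm[where k="(0, 0)" and u=0] by (simp add: qone_def scal_def tp_0)
next
  case (Suc n)
  then show ?case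
    using unit_corner_qmul[OF Suc.prems Suc.IH[OF Suc.prems]] by (simp add: algebra_simps)
qed

lemma unit_corner_E: "unit_corner (E c d) (c, d)"
proof -
  have X3: "unit_corner QX3 (-1, 0)" and X0: "unit_corner QX0 (0, -1)"
    by (auto simp: unit_corner_def QX3_eq QX0_eq lookup_add lookup_single tp_nonzero
        dest!: set_mp[OF keys_add]) (metis tp_0)+
  have "unit_corner (E c d)
      ((0, 0) + ((int (posp (-c)) * -1, int (posp (-c)) * 0) + ((int (posp c) * 1, int (posp c) * 0)
        + ((int (posp d) * 0, int (posp d) * 1) + (int (posp (-d)) * 0, int (posp (-d)) * -1)))))"
    unfolding E_def scal_def QX1_def QX2_def mono_def
    by (intro unit_corner_qmul unit_corner_qpow unit_corner_qterm X3 X0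
        unit_corner_qterm[where u=0, unfolded tp_0])
  moreover have "max x 0 - max (- x) 0 = x" for x :: int
    by linarith
  ultimately show ?thesis
    by (simp add: posp_def)
qed

lemma unit_corner_combination_zero:
  assumes corner: "\<And>k. unit_corner (B k) k" and "finite S"
    and zero: "(\<Sum>k\<in>S. qmul (scal (h k)) (B k)) = 0"
  shows "\<forall>k\<in>S. h k = 0"
proof (rule ccontr)
  let ?Z = "{k\<in>S. h k \<noteq> 0}"
  assume "\<not> (\<forall>k\<in>S. h k = 0)"
  then have Z: "finite ?Z" "?Z \<noteq> {}"
    using \<open>finite S\<close> by auto
  obtain k0 where k0: "k0 \<in> ?Z" and least: "\<And>k. k \<in> ?Z \<Longrightarrow> fst k0 + snd k0 \<le> fst k + snd k"
    using arg_min_if_finite(1)[OF Z, of "\<lambda>k. fst k + snd k"]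
      arg_min_least[OF Z, of _ "\<lambda>k. fst k + snd k"] by blast
  obtain u where u: "Poly_Mapping.lookup (B k0) k0 = tp u"
    using corner[of k0] unfolding unit_corner_def by blast
  have others: "h k * Poly_Mapping.lookup (B k) k0 = 0" if "k \<in> S - {k0}" for k
  proof (rule ccontr)
    assume nz: "h k * Poly_Mapping.lookup (B k) k0 \<noteq> 0"
    then have "fst k0 + snd k0 \<le> fst k + snd k"
      using that by (intro least) auto
    moreover have "fst k \<le> fst k0 \<and> snd k \<le> snd k0"
      using corner[of k] nz by (auto simp: unit_corner_def in_keys_iff)
    ultimately have "k = k0"
      by (simp add: prod_eq_iff)
    with that show False
      by simp
  qed
  have "0 = (\<Sum>k\<in>S. h k * Poly_Mapping.lookup (B k) k0)"
    using arg_cong[OF zero, of "\<lambda>p. Poly_Mapping.lookup p k0"]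
    by (simp add: lookup_sum lookup_qmul_scal)
  also have "\<dots> = h k0 * tp u + (\<Sum>k\<in>S - {k0}. h k * Poly_Mapping.lookup (B k) k0)"
    using k0 u by (subst sum.remove[OF \<open>finite S\<close>, of k0]) auto
  also have "\<dots> = h k0 * tp u"
    using others by (simp add: sum.neutral)
  finally show False
    using k0 by (simp add: tp_nonzero)
qed

lemma lincomb_on:
  assumes "finite S" "{cd. f cd \<noteq> 0} \<subseteq> S"
  shows "lincomb f = (\<Sum>cd\<in>S. qmul (scal (f cd)) (E (fst cd) (snd cd)))"
  unfolding lincomb_def
  by (rule sum.mono_neutral_left) (use assms in \<open>auto simp: scal_def\<close>)

lemma lincomb_eq_imp_eq:
  assumes "finite {cd. f cd \<noteq> 0}" "finite {cd. g cd \<noteq> 0}" "lincomb f = lincomb g"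
  shows "f = g"
proof -
  let ?S = "{cd. f cd \<noteq> 0} \<union> {cd. g cd \<noteq> 0}"
  have fin: "finite ?S"
    using assms by simp
  have corner: "unit_corner (E (fst cd) (snd cd)) cd" for cd
    using unit_corner_E[of "fst cd" "snd cd"] by simp
  have "(\<Sum>cd\<in>?S. qmul (scal (f cd - g cd)) (E (fst cd) (snd cd))) = lincomb f - lincomb g"
    using fin by (simp add: lincomb_on[of ?S] scal_diff qmul_diff_left sum_subtractf)
  also have "\<dots> = 0"
    using assms(3) by simp
  finally have "\<forall>cd\<in>?S. f cd - g cd = 0"
    by (rule unit_corner_combination_zero[where B="\<lambda>cd. E (fst cd) (snd cd)"
          and h="\<lambda>cd. f cd - g cd", OF corner fin])
  then have "f cd = g cd" for cd
    by (metis (mono_tags, lifting) UnI1 UnI2 mem_Collect_eq right_minus_eq)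
  then show "f = g" ..
qed

definition X4_E_coeffs :: "int \<Rightarrow> int \<Rightarrow> int \<times> int \<Rightarrow> lring" where
  "X4_E_coeffs a b cd =
    (if cd = (a - 1, b - 1) then tp (-b)
     else if 1 \<le> a \<and> cd = (a - 1, b + 3) then tp (-4 * a - b) else 0)"

lemma X4_E_coeffs_support:
  "{cd. X4_E_coeffs a b cd \<noteq> 0} = (if 1 \<le> a then {(a - 1, b - 1), (a - 1, b + 3)} else {(a - 1, b - 1)})"
  by (auto simp: X4_E_coeffs_def tp_nonzero)

lemma lincomb_X4_E_coeffs:
  assumes "0 < b"
  shows "lincomb (X4_E_coeffs a b) = qmul (qmul (scal (tp (-a))) QX4) (E a b) - E a (b - 1)"
proof (cases "1 \<le> a")
  case True
  then show ?thesis
    using X4_E_pos[OF True assms]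
    unfolding lincomb_def X4_E_coeffs_support by (simp add: X4_E_coeffs_def)
next
  case False
  then show ?thesis
    using X4_E_nonpos[of a b] assms
    unfolding lincomb_def X4_E_coeffs_support by (simp add: X4_E_coeffs_def)
qed

theorem lemma4p5:
  fixes a b :: int
  assumes "b > 0"
  shows "(\<exists>f. finite {cd. f cd \<noteq> 0} \<and>
            lincomb f = qmul (qmul (scal (tp (-a))) QX4) (E a b) - E a (b - 1))
       \<and> (\<forall>f. finite {cd. f cd \<noteq> 0} \<and>
            lincomb f = qmul (qmul (scal (tp (-a))) QX4) (E a b) - E a (b - 1)
          \<longrightarrow> (\<forall>c d. f (c, d) \<noteq> 0 \<longrightarrow> c = a - 1 \<and> d \<ge> b - 1 \<and> b - 1 \<ge> 0))"
proof -
  let ?T = "qmul (qmul (scal (tp (-a))) QX4) (E a b) - E a (b - 1)"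
  have fin: "finite {cd. X4_E_coeffs a b cd \<noteq> 0}"
    by (simp add: X4_E_coeffs_support)
  have expansion: "lincomb (X4_E_coeffs a b) = ?T"
    by (rule lincomb_X4_E_coeffs[OF assms])
  have unique: "f = X4_E_coeffs a b" if "finite {cd. f cd \<noteq> 0}" "lincomb f = ?T" for f
    using that fin expansion by (intro lincomb_eq_imp_eq) simp_all
  have support: "c = a - 1 \<and> d \<ge> b - 1 \<and> b - 1 \<ge> 0" if "X4_E_coeffs a b (c, d) \<noteq> 0" for c d
    using that assms by (auto simp: X4_E_coeffs_def split: if_splits)
  show ?thesis
  proof (intro conjI allI impI)
    show "\<exists>f. finite {cd. f cd \<noteq> 0} \<and> lincomb f = ?T"
      using fin expansion by blast
  next
    fix f c d
    assume "finite {cd. f cd \<noteq> 0} \<and> lincomb f = ?T" and "f (c, d) \<noteq> 0"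
    then show "c = a - 1" "d \<ge> b - 1" "b - 1 \<ge> 0"
      using unique support by blast+
  qed
qed

end
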